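(* Let $\mathscr{C}=\{C_k\}_{k\in I}$ be a polycylinder packing of $\mathbb{R}^{n+2}$, fix distinct $i,j\in I$, and let $x$ be a point of the core $a_i$ of $C_i$. Let $y$ and $z$ be points on the circle $S_x(2/\sqrt{3})$. If each of $y$ and $z$ is equidistant from $C_i$ and $C_j$, then the angle $\angle yxz$ is at most $2\arccos(\sqrt{3}-1)\approx 85.8828^\circ$.
   Context: A polycylinder is a subset of $\mathbb{R}^{n+2}$ isometric to $\mathbb{D}^2\times\mathbb{R}^n$, where $\mathbb{D}^2$ is the closed unit disk. A polycylinder packing of $\mathbb{R}^{n+2}$ is a countable family of polycylinders with mutually disjoint interiors. The core $a_k$ of a polycylinder $C_k$ is the $n$-dimensional affine subspace such that $C_k$ is the set of points at distance at most $1$ from $a_k$. For $x\in a_i$, $p_x$ is the $2$-dimensional affine plane through $x$ orthogonal to $a_i$, and $S_x(r)$ denotes the circle of radius $r$ in $p_x$ centered at $x$. *)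

theory Defs
  imports "HOL-Analysis.Analysis"
begin

text \<open>Ambient space: a Euclidean space of dimension n+2, i.e. DIM('a) \<ge> 2.
A polycylinder is given by its core a, an n-dimensional affine subspace
(aff_dim a = DIM('a) - 2); the polycylinder is the set of points at distance
at most 1 from the core (isometric to D^2 x R^n).\<close>

definition is_core :: "'a::euclidean_space set \<Rightarrow> bool" where
  "is_core a \<longleftrightarrow> affine a \<and> a \<noteq> {} \<and> aff_dim a = int DIM('a) - 2"

definition polycyl :: "'a::euclidean_space set \<Rightarrow> 'a set" where
  "polycyl a = {p. infdist p a \<le> 1}"

definition polycyl_packing :: "'i set \<Rightarrow> ('i \<Rightarrow> 'a::euclidean_space set) \<Rightarrow> bool" where
  "polycyl_packing I A \<longleftrightarrow> countable I \<and> (\<forall>k\<in>I. is_core (A k)) \<and>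
     (\<forall>k\<in>I. \<forall>l\<in>I. k \<noteq> l \<longrightarrow>
        interior (polycyl (A k)) \<inter> interior (polycyl (A l)) = {})"

definition orth_plane :: "'a::euclidean_space set \<Rightarrow> 'a \<Rightarrow> 'a set" where
  "orth_plane a x = {p. \<forall>u\<in>a. inner (p - x) (u - x) = 0}"

definition circ :: "'a::euclidean_space set \<Rightarrow> 'a \<Rightarrow> real \<Rightarrow> 'a set" where
  "circ a x r = {p \<in> orth_plane a x. dist p x = r}"

definition vec_angle :: "'a::euclidean_space \<Rightarrow> 'a \<Rightarrow> real" where
  "vec_angle u v = arccos (inner u v / (norm u * norm v))"

end

theory Submission
  imports Defs
begin

text \<open>Put \<open>r = 2/\<surd>3\<close>, \<open>Y = y - x\<close>, \<open>Z = z - x\<close>. A point at distance \<open>r\<close> from the core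
\<open>a\<^sub>i\<close> is within \<open>r - 1\<close> of \<open>C\<^sub>i\<close>, so by equidistance \<open>y\<close> and \<open>z\<close> lie within \<open>r\<close> of the core
\<open>a\<^sub>j\<close>. As the distance to the convex set \<open>a\<^sub>j\<close> is convex, some \<open>m \<in> a\<^sub>j\<close> lies within \<open>r\<close> of
the midpoint of \<open>y\<close> and \<open>z\<close>, which is at distance \<open>\<parallel>Y + Z\<parallel>/2\<close> from \<open>x\<close>. Disjointness of the
interiors forces \<open>d(m, a\<^sub>i) \<ge> 2\<close>, hence \<open>\<parallel>Y + Z\<parallel> \<ge> 2(2 - r) = 2 (\<surd>3 - 1) r\<close>: the half
angle between \<open>Y\<close> and \<open>Z\<close> has cosine at least \<open>\<surd>3 - 1\<close>.\<close>

lemma closed_polycyl: "closed (polycyl A)"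
  unfolding polycyl_def by (intro closed_Collect_le continuous_intros)

lemma subset_polycyl: "A \<subseteq> polycyl A"
  by (auto simp: polycyl_def)

lemma infdist_polycyl_interior: "{p. infdist p A < 1} \<subseteq> interior (polycyl A)"
proof (rule interior_maximal)
  show "open {p. infdist p A < 1}"
    by (intro open_Collect_less continuous_intros)
qed (auto simp: polycyl_def)

lemma infdist_le_infdist_polycyl:
  assumes "A \<noteq> {}"
  shows "infdist p A \<le> infdist p (polycyl A) + 1"
proof -
  obtain q where q: "q \<in> polycyl A" "infdist p (polycyl A) = dist p q"
    using infdist_attains_inf[OF closed_polycyl] subset_polycyl assms by blast
  have "infdist p A \<le> infdist q A + dist p q"
    by (rule infdist_triangle)
  with q show ?thesis
    by (simp add: polycyl_def)
qed

lemma infdist_polycyl_le: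
  assumes "x \<in> A" "1 \<le> dist p x"
  shows "infdist p (polycyl A) \<le> dist p x - 1"
proof -
  define q where "q = x + (1 / dist p x) *\<^sub>R (p - x)"
  have "dist q x = 1"
    using assms(2) by (auto simp: q_def dist_norm)
  then have "q \<in> polycyl A"
    using infdist_le[OF assms(1), of q] by (simp add: polycyl_def)
  moreover have "p - q = (1 - 1 / dist p x) *\<^sub>R (p - x)"
    by (simp add: q_def algebra_simps)
  moreover have "0 \<le> 1 - 1 / dist p x"
    using assms(2) by (simp add: divide_le_eq_1)
  ultimately have "dist p q = (1 - 1 / dist p x) * dist p x"
    by (simp add: dist_norm)
  also have "\<dots> = dist p x - 1"
    using assms(2) by (auto simp: field_simps)
  finally show ?thesis
    using infdist_le[OF \<open>q \<in> polycyl A\<close>, of p] by simp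
qed

lemma infdist_le_if_equidistant_polycyl:
  assumes "x \<in> A" "B \<noteq> {}" "1 \<le> dist p x"
    and "infdist p (polycyl A) = infdist p (polycyl B)"
  shows "infdist p B \<le> dist p x"
  using infdist_le_infdist_polycyl[OF assms(2), of p] infdist_polycyl_le[OF assms(1,3)] assms(4)
  by simp

lemma infdist_ge_2_if_polycyl_interiors_disjoint:
  assumes "interior (polycyl A) \<inter> interior (polycyl B) = {}"
    and "closed A" "A \<noteq> {}" "b \<in> B"
  shows "2 \<le> infdist b A"
proof (rule ccontr)
  assume "\<not> 2 \<le> infdist b A"
  moreover obtain a where a: "a \<in> A" "infdist b A = dist b a"
    using infdist_attains_inf[OF assms(2,3)] by blast
  ultimately have "dist (midpoint b a) a < 1" "dist (midpoint b a) b < 1"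
    by (simp_all add: dist_midpoint)
  then have "infdist (midpoint b a) A < 1" "infdist (midpoint b a) B < 1"
    using infdist_le[OF a(1)] infdist_le[OF assms(4)] by (meson le_less_trans)+
  then show False
    using infdist_polycyl_interior[of A] infdist_polycyl_interior[of B] assms(1) by blast
qed

lemma infdist_midpoint_le:
  fixes B :: "'a::euclidean_space set"
  assumes "convex B" "closed B" "B \<noteq> {}"
  shows "infdist (midpoint y z) B \<le> (infdist y B + infdist z B) / 2"
proof -
  obtain y' z' where "y' \<in> B" "infdist y B = dist y y'" "z' \<in> B" "infdist z B = dist z z'"
    using infdist_attains_inf[OF assms(2,3)] by metis
  moreover have "midpoint y' z' \<in> B"
    using assms(1) \<open>y' \<in> B\<close> \<open>z' \<in> B\<close> closed_segment_subset midpoint_in_closed_segment by blast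
  moreover have "dist (midpoint y z) (midpoint y' z') \<le> (dist y y' + dist z z') / 2"
  proof -
    have "midpoint y z - midpoint y' z' = (1/2) *\<^sub>R ((y - y') + (z - z'))"
      by (simp add: midpoint_def algebra_simps)
    then show ?thesis
      using norm_triangle_ineq[of "y - y'" "z - z'"] by (simp add: dist_norm)
  qed
  ultimately show ?thesis
    by (metis infdist_le order_trans)
qed

lemma vec_angle_le_twice_arccos:
  fixes Y Z :: "'a::euclidean_space"
  assumes "norm Y = r" "norm Z = r" "0 < r"
    and "0 \<le> c" "c \<le> 1" "2 * c * r \<le> norm (Y + Z)"
  shows "vec_angle Y Z \<le> 2 * arccos c"
proof -
  have "(2 * c * r)\<^sup>2 \<le> (norm (Y + Z))\<^sup>2"
    using assms by (intro power_mono) auto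
  also have "(norm (Y + Z))\<^sup>2 = 2 * r\<^sup>2 + 2 * (Y \<bullet> Z)"
    using assms(1,2) power2_norm_eq_inner[of Y] power2_norm_eq_inner[of Z]
    by (simp add: power2_norm_eq_inner inner_add_left inner_add_right inner_commute)
  finally have lower: "2 * c\<^sup>2 - 1 \<le> Y \<bullet> Z / (norm Y * norm Z)"
    using assms(1-3) by (simp add: field_simps power2_eq_square)
  have upper: "Y \<bullet> Z / (norm Y * norm Z) \<le> 1"
    using norm_cauchy_schwarz[of Y Z] assms(1-3) by simp
  have "arccos (2 * c\<^sup>2 - 1) = arccos (cos (2 * arccos c))"
    using assms(4,5) by (simp add: cos_double_cos cos_arccos)
  also have "\<dots> = 2 * arccos c"
    using assms(4,5) arccos_lbound[of c] arccos_le_pi2[of c] by (intro arccos_cos) auto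
  finally show ?thesis
    unfolding vec_angle_def using arccos_le_arccos[OF _ lower upper] by simp
qed

theorem mainTheorem6:
  fixes I :: "'i set" and A :: "'i \<Rightarrow> 'a::euclidean_space set"
    and i j :: 'i and x y z :: 'a
  assumes "DIM('a) \<ge> 2"
    and "polycyl_packing I A"
    and "i \<in> I" "j \<in> I" "i \<noteq> j"
    and "x \<in> A i"
    and "y \<in> circ (A i) x (2 / sqrt 3)" "z \<in> circ (A i) x (2 / sqrt 3)"
    and "infdist y (polycyl (A i)) = infdist y (polycyl (A j))"
    and "infdist z (polycyl (A i)) = infdist z (polycyl (A j))"
  shows "vec_angle (y - x) (z - x) \<le> 2 * arccos (sqrt 3 - 1)"
proof -
  define r where "r = 2 / sqrt 3"
  have sqrt3: "1.7 < sqrt 3" "sqrt 3 < 1.8"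
    by (rule real_less_rsqrt real_less_lsqrt; simp add: power2_eq_square)+
  then have "1 < r" "2 * (sqrt 3 - 1) * r = 4 - 2 * r"
    by (simp_all add: r_def field_simps)
  have "is_core (A i)" "is_core (A j)"
    and disjoint: "interior (polycyl (A i)) \<inter> interior (polycyl (A j)) = {}"
    using assms(2-5) by (auto simp: polycyl_packing_def)
  then have cores: "affine (A i)" "A i \<noteq> {}" "affine (A j)" "A j \<noteq> {}"
    by (auto simp: is_core_def)
  have "dist y x = r" "dist z x = r"
    using assms(7,8) by (simp_all add: circ_def r_def)
  then have "infdist (midpoint y z) (A j) \<le> r"
    using infdist_midpoint_le[OF affine_imp_convex affine_closed, OF cores(3,3,4), of y z]
      infdist_le_if_equidistant_polycyl[OF assms(6) cores(4) _ assms(9)]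
      infdist_le_if_equidistant_polycyl[OF assms(6) cores(4) _ assms(10)] \<open>1 < r\<close>
    by simp
  then obtain m where "m \<in> A j" "dist (midpoint y z) m \<le> r"
    using infdist_attains_inf[OF affine_closed cores(4)] cores(3) by metis
  moreover have "(y - x) + (z - x) = 2 *\<^sub>R (midpoint y z - x)"
    by (simp add: midpoint_def scaleR_diff_right scaleR_add_right scaleR_2)
  then have "dist (midpoint y z) x = norm ((y - x) + (z - x)) / 2"
    by (simp add: dist_norm)
  ultimately have "2 * (sqrt 3 - 1) * r \<le> norm ((y - x) + (z - x))"
    using infdist_ge_2_if_polycyl_interiors_disjoint[OF disjoint affine_closed, OF cores(1,2) \<open>m \<in> A j\<close>]
      infdist_le[OF assms(6), of m] dist_triangle[of m x "midpoint y z"]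
      dist_commute[of m "midpoint y z"] \<open>2 * (sqrt 3 - 1) * r = 4 - 2 * r\<close>
    by linarith
  then show ?thesis
    using \<open>dist y x = r\<close> \<open>dist z x = r\<close> \<open>1 < r\<close> sqrt3
    by (intro vec_angle_le_twice_arccos[where r = r]) (auto simp: dist_norm)
qed

end
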